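(* Let $X$ be a compact Hausdorff space, $\mathcal{A}$ a unital $C^*$-algebra with unit $1$, and $\mathcal{E}$ a $*$-subalgebra of $C(X,\mathcal{A})$. Then the constant function $1_X\equiv 1$ belongs to the uniform closure $\bar{\mathcal{E}}$ of $\mathcal{E}$ iff for every $x\in X$ there is $f\in\mathcal{E}$ such that $f(x)$ is invertible in $\mathcal{A}$.
   Context: $C(X,\mathcal{A})$ is the $C^*$-algebra of continuous maps $X\to\mathcal{A}$ with pointwise operations and supremum norm. *)

theory Defs
  imports "HOL-Analysis.Analysis"
begin

class cstar_algebra = real_normed_algebra + ring_1 + banach +
  fixes scaleC :: "complex \<Rightarrow> 'a \<Rightarrow> 'a"
    and cstar :: "'a \<Rightarrow> 'a"
  assumes scaleC_add_right: "scaleC c (x + y) = scaleC c x + scaleC c y"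
    and scaleC_add_left: "scaleC (c + d) x = scaleC c x + scaleC d x"
    and scaleC_scaleC: "scaleC c (scaleC d x) = scaleC (c * d) x"
    and scaleC_one: "scaleC 1 x = x"
    and scaleC_of_real: "scaleC (complex_of_real r) x = scaleR r x"
    and scaleC_mult_left: "scaleC c x * y = scaleC c (x * y)"
    and scaleC_mult_right: "x * scaleC c y = scaleC c (x * y)"
    and norm_scaleC: "norm (scaleC c x) = cmod c * norm x"
    and cstar_cstar: "cstar (cstar x) = x"
    and cstar_add: "cstar (x + y) = cstar x + cstar y"
    and cstar_mult: "cstar (x * y) = cstar y * cstar x"
    and cstar_scaleC: "cstar (scaleC c x) = scaleC (cnj c) (cstar x)"
    and cstar_identity: "norm (cstar x * x) = norm x ^ 2"

definition invertible_el :: "'a::ring_1 \<Rightarrow> bool" where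
  "invertible_el a \<longleftrightarrow> (\<exists>b. a * b = 1 \<and> b * a = 1)"

text \<open>*-subalgebras of C(X,A): sets of continuous maps closed under the pointwise
algebra operations and involution (values outside topspace X are irrelevant).\<close>

definition star_subalgebra :: "'x topology \<Rightarrow> ('x \<Rightarrow> 'a::cstar_algebra) set \<Rightarrow> bool" where
  "star_subalgebra X E \<longleftrightarrow>
     (\<forall>f\<in>E. continuous_map X euclidean f) \<and>
     (\<lambda>x. 0) \<in> E \<and>
     (\<forall>f\<in>E. \<forall>g\<in>E. (\<lambda>x. f x + g x) \<in> E) \<and>
     (\<forall>f\<in>E. \<forall>g\<in>E. (\<lambda>x. f x * g x) \<in> E) \<and>
     (\<forall>c. \<forall>f\<in>E. (\<lambda>x. scaleC c (f x)) \<in> E) \<and>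
     (\<forall>f\<in>E. (\<lambda>x. cstar (f x)) \<in> E)"

definition uniform_closure :: "'x topology \<Rightarrow> ('x \<Rightarrow> 'a::real_normed_vector) set \<Rightarrow> ('x \<Rightarrow> 'a) set" where
  "uniform_closure X E = {g. \<forall>e>0. \<exists>f\<in>E. \<forall>x\<in>topspace X. norm (f x - g x) \<le> e}"

end

(*
  If 1 is a uniform limit of elements of E, some f in E is uniformly within 1/2 of 1, and every f(x)
  is invertible by the Neumann series. Conversely, if f(x) is invertible, then b = f* f / M with
  M > sup |f* f| is self-adjoint, |b| < 1 on X and b(x) is invertible; e = b^2 then satisfies
  |1 - e| <= 1 on X and |1 - e(x)| < 1, hence |1 - e| < 1 near x. Averaging finitely many such e
  over a cover of the compact space X gives h in E with sup |1 - h| < 1, and 1 - (1 - h)^k in E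
  tends to 1 uniformly.

  The two norm estimates for 1 - b^2 avoid spectral theory. Let a be the binomial-series square
  root of 1 - b^2. For commuting self-adjoint a and d, the element u = a + i d satisfies
  u* u = a^2 + d^2 and 2 a = u + u*, so |a|^2 <= |a^2 + d^2|. Taking d = b gives |1 - b^2| <= 1;
  if b has inverse c, taking d = b sqrt(1 - eps c^2) gives a^2 + d^2 = 1 - eps, so |1 - b^2| < 1.
*)

theory Submission
  imports Defs "HOL-Computational_Algebra.Formal_Power_Series"
begin

lemma cstar_one [simp]: "cstar 1 = (1::'a::cstar_algebra)"
  using cstar_mult[of "cstar 1" "1::'a"] by (simp add: cstar_cstar)

lemma norm_one_cstar_algebra: "norm (1::'a::cstar_algebra) = 1"
proof -
  have "norm (1::'a) ^ 2 = norm (1::'a)"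
    using cstar_identity[of "1::'a"] by simp
  then show ?thesis
    by (simp add: power2_eq_square)
qed

instance cstar_algebra \<subseteq> real_normed_algebra_1
  by standard (fact norm_one_cstar_algebra)

lemma cstar_zero [simp]: "cstar 0 = (0::'a::cstar_algebra)"
  using cstar_add[of "0::'a" 0] by simp

lemma cstar_minus: "cstar (- x) = - cstar (x::'a::cstar_algebra)"
  using cstar_add[of x "- x"] by (simp add: eq_neg_iff_add_eq_0 add.commute)

lemma cstar_scaleR: "cstar (r *\<^sub>R x) = r *\<^sub>R cstar (x::'a::cstar_algebra)"
  using cstar_scaleC[of "complex_of_real r" x] by (simp add: scaleC_of_real)

lemma cstar_power: "cstar (x ^ n) = cstar (x::'a::cstar_algebra) ^ n"
  by (induction n) (simp_all add: cstar_mult power_commutes)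

lemma scaleC_minus_left: "scaleC (- c) x = - scaleC c (x::'a::cstar_algebra)"
proof -
  have "scaleC (- c) x + scaleC c x = 0"
    using scaleC_of_real[of 0 x] by (simp flip: scaleC_add_left)
  then show ?thesis
    by (simp add: eq_neg_iff_add_eq_0)
qed

lemma norm_cstar_le: "norm (cstar x) \<le> norm (x::'a::cstar_algebra)"
proof -
  have "norm (cstar x) * norm (cstar x) = norm (x * cstar x)"
    using cstar_identity[of "cstar x"] by (simp add: cstar_cstar power2_eq_square)
  also have "\<dots> \<le> norm x * norm (cstar x)"
    by (rule norm_mult_ineq)
  finally show ?thesis
    by (cases "cstar x = 0") (simp_all add: mult_le_cancel_right)
qed

lemma norm_cstar [simp]: "norm (cstar x) = norm (x::'a::cstar_algebra)"
  using norm_cstar_le[of x] norm_cstar_le[of "cstar x"] by (simp add: cstar_cstar)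

lemma bounded_linear_cstar: "bounded_linear (cstar :: 'a::cstar_algebra \<Rightarrow> 'a)"
  by (rule bounded_linear_intro[of _ 1]) (simp_all add: cstar_add cstar_scaleR)

lemma norm_square_selfadjoint: "cstar a = a \<Longrightarrow> norm (a * a) = norm (a::'a::cstar_algebra) ^ 2"
  using cstar_identity[of a] by simp

lemma invertible_el_mult:
  assumes "invertible_el (a::'a::ring_1)" and "invertible_el b"
  shows "invertible_el (a * b)"
proof -
  obtain a' where "a * a' = 1" "a' * a = 1"
    using assms(1) unfolding invertible_el_def by blast
  moreover obtain b' where "b * b' = 1" "b' * b = 1"
    using assms(2) unfolding invertible_el_def by blast
  ultimately have "a * b * (b' * a') = 1" "b' * a' * (a * b) = 1"
    by (simp_all add: mult.assoc flip: mult.assoc[of b b'] mult.assoc[of a' a])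
  then show ?thesis
    unfolding invertible_el_def by blast
qed

lemma invertible_el_scaleR:
  assumes "r \<noteq> 0" and "invertible_el (x::'a::real_algebra_1)"
  shows "invertible_el (r *\<^sub>R x)"
proof -
  obtain x' where "x * x' = 1" "x' * x = 1"
    using assms(2) unfolding invertible_el_def by blast
  then have "r *\<^sub>R x * (inverse r *\<^sub>R x') = 1" "inverse r *\<^sub>R x' * (r *\<^sub>R x) = 1"
    using assms(1) by simp_all
  then show ?thesis
    unfolding invertible_el_def by blast
qed

lemma invertible_el_cstar:
  assumes "invertible_el (x::'a::cstar_algebra)"
  shows "invertible_el (cstar x)"
proof -
  obtain x' where "x * x' = 1" "x' * x = 1"
    using assms unfolding invertible_el_def by blast
  then have "cstar x * cstar x' = 1" "cstar x' * cstar x = 1"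
    by (metis cstar_mult cstar_one)+
  then show ?thesis
    unfolding invertible_el_def by blast
qed

lemma invertible_el_one_minus:
  fixes y :: "'a::{real_normed_algebra_1,banach}"
  assumes "norm y < 1"
  shows "invertible_el (1 - y)"
proof -
  have summable: "summable (\<lambda>n. y ^ n)"
    by (rule summable_comparison_test[OF _ summable_geometric[of "norm y"]])
       (use assms in \<open>simp_all add: norm_power_ineq\<close>)
  define s where "s = (\<Sum>n. y ^ n)"
  have shift: "(\<Sum>n. y ^ Suc n) = s - 1"
    unfolding s_def using suminf_split_head[OF summable] by simp
  have "(1 - y) * s = s - (\<Sum>n. y * y ^ n)"
    unfolding s_def by (simp add: left_diff_distrib suminf_mult[OF summable])
  moreover have "s * (1 - y) = s - (\<Sum>n. y ^ n * y)"
    unfolding s_def by (simp add: right_diff_distrib suminf_mult2[OF summable])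
  ultimately have "(1 - y) * s = 1" "s * (1 - y) = 1"
    using shift by (simp_all add: power_commutes)
  then show ?thesis
    unfolding invertible_el_def by blast
qed

section \<open>Square roots by the binomial series\<close>

definition sqrt_one_minus :: "'a::{real_normed_algebra_1,banach} \<Rightarrow> 'a" where
  "sqrt_one_minus y = (\<Sum>k. ((1/2) gchoose k) *\<^sub>R (- y) ^ k)"

lemma abs_gbinomial_half_le_one: "\<bar>(1/2::real) gchoose k\<bar> \<le> 1"
proof (induction k)
  case (Suc k)
  have "real (Suc k) * ((1/2) gchoose Suc k) = (1/2 - real k) * ((1/2) gchoose k)"
    using gbinomial_mult_1[of "1/2::real" k] by (simp add: algebra_simps)
  then have "real (Suc k) * \<bar>(1/2) gchoose Suc k\<bar> =
      \<bar>1/2 - real k\<bar> * \<bar>(1/2::real) gchoose k\<bar>"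
    by (metis abs_mult abs_of_nat)
  also have "\<dots> \<le> real (Suc k) * 1"
    using Suc.IH by (intro mult_mono) auto
  finally show ?case
    by (simp only: mult_le_cancel_left_pos of_nat_0_less_iff zero_less_Suc)
qed simp

lemma summable_norm_sqrt_one_minus:
  fixes y :: "'a::{real_normed_algebra_1,banach}"
  assumes "norm y < 1"
  shows "summable (\<lambda>k. norm (((1/2) gchoose k) *\<^sub>R (- y) ^ k))"
proof (rule summable_comparison_test[OF _ summable_geometric[of "norm y"]])
  have "\<bar>(1/2) gchoose k\<bar> * norm ((- y) ^ k) \<le> norm y ^ k" for k
    using order.trans[OF mult_left_le_one_le[OF norm_ge_zero abs_ge_zero abs_gbinomial_half_le_one]
        norm_power_ineq[of "- y" k]]
    by simp
  then show "\<exists>N. \<forall>k\<ge>N. norm (norm (((1/2) gchoose k) *\<^sub>R (- y) ^ k)) \<le> norm y ^ k"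
    by simp
qed (use assms in simp)

lemma sqrt_one_minus_square:
  fixes y :: "'a::{real_normed_algebra_1,banach}"
  assumes "norm y < 1"
  shows "sqrt_one_minus y * sqrt_one_minus y = 1 - y"
proof -
  define a where "a k = ((1/2) gchoose k) *\<^sub>R (- y) ^ k" for k
  have "sqrt_one_minus y * sqrt_one_minus y = (\<Sum>k. \<Sum>i\<le>k. a i * a (k - i))"
    unfolding sqrt_one_minus_def a_def
    using summable_norm_sqrt_one_minus[OF assms] summable_norm_sqrt_one_minus[OF assms]
    by (rule Cauchy_product)
  also have "\<dots> = (\<Sum>k. (1 gchoose k) *\<^sub>R (- y) ^ k)"
  proof (intro suminf_cong)
    fix k
    have "(\<Sum>i\<le>k. a i * a (k - i)) =
        (\<Sum>i\<le>k. ((1/2) gchoose i) * ((1/2) gchoose (k - i))) *\<^sub>R (- y) ^ k"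
      unfolding a_def scaleR_sum_left
      by (intro sum.cong refl) (simp add: power_add[symmetric])
    also have "\<dots> = (1 gchoose k) *\<^sub>R (- y) ^ k"
      using gbinomial_Vandermonde[of "1/2::real" "1/2" k] by (simp add: atLeast0AtMost)
    finally show "(\<Sum>i\<le>k. a i * a (k - i)) = (1 gchoose k) *\<^sub>R (- y) ^ k" .
  qed
  also have "\<dots> = (\<Sum>k\<in>{0, 1}. (1 gchoose k) *\<^sub>R (- y) ^ k)"
  proof (rule suminf_finite)
    fix k :: nat
    assume "k \<notin> {0, 1}"
    then have "(1::real) gchoose k = of_nat (1 choose k)" and "1 < k"
      using binomial_gbinomial[of 1 k, where 'a = real] by auto
    then show "(1 gchoose k) *\<^sub>R (- y) ^ k = 0"
      by (simp add: binomial_eq_0)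
  qed simp
  also have "\<dots> = 1 - y"
    by simp
  finally show ?thesis .
qed

lemma sqrt_one_minus_commute:
  fixes x y :: "'a::{real_normed_algebra_1,banach}"
  assumes "norm y < 1" and "y * x = x * y"
  shows "sqrt_one_minus y * x = x * sqrt_one_minus y"
proof -
  note summable = summable_norm_cancel[OF summable_norm_sqrt_one_minus[OF assms(1)]]
  have "(- y) ^ k * x = x * (- y) ^ k" for k
    using assms(2) by (intro power_commuting_commutes) simp
  then show ?thesis
    unfolding sqrt_one_minus_def suminf_mult2[OF summable] suminf_mult[OF summable, symmetric]
    by simp
qed

lemma cstar_sqrt_one_minus:
  fixes y :: "'a::cstar_algebra"
  assumes "norm y < 1" and "cstar y = y"
  shows "cstar (sqrt_one_minus y) = sqrt_one_minus y"
  unfolding sqrt_one_minus_def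
  using bounded_linear.suminf[OF bounded_linear_cstar
      summable_norm_cancel[OF summable_norm_sqrt_one_minus[OF assms(1)]]]
  by (simp add: cstar_scaleR cstar_power cstar_minus assms(2))

section \<open>Norm estimates without spectral theory\<close>

lemma norm_square_le_norm_sum_squares:
  fixes a b :: "'a::cstar_algebra"
  assumes "cstar a = a" and "cstar b = b" and "a * b = b * a"
  shows "norm a ^ 2 \<le> norm (a * a + b * b)"
proof -
  define u where "u = a + scaleC \<i> b"
  have cstar_u: "cstar u = a - scaleC \<i> b"
    by (simp add: u_def cstar_add cstar_scaleC assms(1,2) scaleC_minus_left)
  have commute: "a * scaleC \<i> b = scaleC \<i> b * a"
    by (simp add: scaleC_mult_left scaleC_mult_right assms(3))
  have square: "scaleC \<i> b * scaleC \<i> b = - (b * b)"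
    by (simp add: scaleC_mult_left scaleC_mult_right scaleC_scaleC scaleC_minus_left scaleC_one)
  have "cstar u * u = (a - scaleC \<i> b) * (a + scaleC \<i> b)"
    unfolding cstar_u by (simp only: u_def)
  also have "\<dots> = a * a + b * b"
    by (simp add: algebra_simps commute square)
  finally have "cstar u * u = a * a + b * b" .
  then have norm_u: "norm u ^ 2 = norm (a * a + b * b)"
    using cstar_identity[of u] by simp
  have "u + cstar u = 2 *\<^sub>R a"
    unfolding cstar_u by (simp add: u_def scaleR_2)
  then have "2 * norm a = norm (u + cstar u)"
    by simp
  also have "\<dots> \<le> 2 * norm u"
    using norm_triangle_ineq[of u "cstar u"] by simp
  finally have "norm a \<le> norm u"
    by simp
  then show ?thesis
    unfolding norm_u[symmetric] by (simp add: power_mono)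
qed

lemma norm_mult_self_less_one:
  fixes b :: "'a::real_normed_algebra"
  assumes "norm b < 1"
  shows "norm (b * b) < 1"
  using norm_mult_ineq[of b b] assms mult_strict_mono'[of "norm b" 1 "norm b" 1] by simp

lemma norm_one_minus_square_le:
  fixes b d :: "'a::cstar_algebra"
  assumes "cstar b = b" and "norm b < 1" and "cstar d = d" and "d * (b * b) = b * b * d"
  shows "norm (1 - b * b) \<le> norm (1 - b * b + d * d)"
proof -
  have small: "norm (b * b) < 1"
    using assms(2) by (rule norm_mult_self_less_one)
  define a where "a = sqrt_one_minus (b * b)"
  have "cstar a = a"
    unfolding a_def using small by (rule cstar_sqrt_one_minus) (simp add: cstar_mult assms(1))
  moreover have "a * d = d * a"
    unfolding a_def using small by (rule sqrt_one_minus_commute) (fact assms(4)[symmetric])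
  moreover have "a * a = 1 - b * b"
    unfolding a_def using small by (rule sqrt_one_minus_square)
  ultimately show ?thesis
    using norm_square_le_norm_sum_squares[of a d] assms(3) norm_square_selfadjoint[of a] by simp
qed

lemma norm_one_minus_square_le_one:
  fixes b :: "'a::cstar_algebra"
  assumes "cstar b = b" and "norm b < 1"
  shows "norm (1 - b * b) \<le> 1"
  using norm_one_minus_square_le[OF assms assms(1)] by (simp add: mult.assoc)

lemma norm_one_minus_square_less_one:
  fixes b :: "'a::cstar_algebra"
  assumes b_sa: "cstar b = b" and "norm b < 1" and "invertible_el b"
  shows "norm (1 - b * b) < 1"
proof -
  obtain c where bc: "b * c = 1" and cb: "c * b = 1"
    using assms(3) unfolding invertible_el_def by blast
  have c_sa: "cstar c = c"
    using bc cb by (metis b_sa cstar_mult cstar_one mult.assoc mult_1_left mult_1_right)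
  define \<epsilon> where "\<epsilon> = inverse (1 + norm c ^ 2)"
  have "0 < norm c ^ 2"
    using bc by (cases "c = 0") auto
  then have \<epsilon>: "0 < \<epsilon>" "\<epsilon> < 1"
    unfolding \<epsilon>_def by (simp_all add: field_simps add_pos_nonneg)
  define y where "y = \<epsilon> *\<^sub>R (c * c)"
  have "norm y \<le> \<epsilon> * norm c ^ 2"
    unfolding y_def power2_eq_square using \<epsilon> by (simp add: norm_mult_ineq)
  also have "\<dots> < 1"
    using add_pos_nonneg[of 1 "norm c ^ 2"] unfolding \<epsilon>_def by (simp add: field_simps)
  finally have y_small: "norm y < 1" .
  have "b * b * (c * c) = 1"
    using bc cb by (metis mult.assoc mult_1_left)
  then have bb_y: "b * b * y = \<epsilon> *\<^sub>R 1"
    unfolding y_def by simp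
  define g where "g = sqrt_one_minus y"
  have g_sa: "cstar g = g"
    unfolding g_def using y_small
    by (rule cstar_sqrt_one_minus) (simp add: y_def cstar_scaleR cstar_mult c_sa)
  have gb: "g * b = b * g"
    unfolding g_def using y_small
    by (rule sqrt_one_minus_commute) (simp add: y_def mult.assoc bc cb flip: mult.assoc[of b c c])
  have "b * g * (b * g) = b * b * (g * g)"
    by (metis gb mult.assoc)
  also have "\<dots> = b * b - \<epsilon> *\<^sub>R 1"
    using sqrt_one_minus_square[OF y_small] bb_y by (simp add: g_def right_diff_distrib)
  finally have "1 - b * b + b * g * (b * g) = (1 - \<epsilon>) *\<^sub>R 1"
    by (simp add: scaleR_diff_left)
  moreover have "b * g * (b * b) = b * b * (b * g)"
    by (metis gb mult.assoc)
  ultimately show ?thesis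
    using norm_one_minus_square_le[of b "b * g"] assms(1,2) \<epsilon>
    by (simp add: cstar_mult g_sa gb)
qed

section \<open>*-subalgebras of C(X, A)\<close>

lemma
  assumes "star_subalgebra X E"
  shows star_subalgebra_continuous: "f \<in> E \<Longrightarrow> continuous_map X euclidean f"
    and star_subalgebra_zero: "(\<lambda>x. 0) \<in> E"
    and star_subalgebra_add: "f \<in> E \<Longrightarrow> g \<in> E \<Longrightarrow> (\<lambda>x. f x + g x) \<in> E"
    and star_subalgebra_mult: "f \<in> E \<Longrightarrow> g \<in> E \<Longrightarrow> (\<lambda>x. f x * g x) \<in> E"
    and star_subalgebra_scaleC: "f \<in> E \<Longrightarrow> (\<lambda>x. scaleC c (f x)) \<in> E"
    and star_subalgebra_cstar: "f \<in> E \<Longrightarrow> (\<lambda>x. cstar (f x)) \<in> E"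
  using assms unfolding star_subalgebra_def by auto

lemma star_subalgebra_scaleR:
  "star_subalgebra X E \<Longrightarrow> f \<in> E \<Longrightarrow> (\<lambda>x. r *\<^sub>R f x) \<in> E"
  using star_subalgebra_scaleC[of X E f "complex_of_real r"] by (simp add: scaleC_of_real)

lemma star_subalgebra_diff:
  assumes "star_subalgebra X E" and "f \<in> E" and "g \<in> E"
  shows "(\<lambda>x. f x - g x) \<in> E"
  using star_subalgebra_add[OF assms(1,2) star_subalgebra_scaleR[OF assms(1,3), of "-1"]] by simp

lemma star_subalgebra_sum:
  assumes "star_subalgebra X E" and "finite S" and "\<And>i. i \<in> S \<Longrightarrow> f i \<in> E"
  shows "(\<lambda>x. \<Sum>i\<in>S. f i x) \<in> E"
  using assms(2,3)
proof (induction S rule: finite_induct)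
  case empty
  then show ?case
    using star_subalgebra_zero[OF assms(1)] by simp
next
  case (insert i S)
  then show ?case
    using star_subalgebra_add[OF assms(1), of "f i" "\<lambda>x. \<Sum>i\<in>S. f i x"] by simp
qed

lemma star_subalgebra_one_minus_power:
  assumes "star_subalgebra X E" and "h \<in> E"
  shows "(\<lambda>x. 1 - (1 - h x) ^ k) \<in> E"
proof (induction k)
  case 0
  then show ?case
    using star_subalgebra_zero[OF assms(1)] by simp
next
  case (Suc k)
  have "(\<lambda>x. 1 - (1 - h x) ^ Suc k) =
      (\<lambda>x. (1 - (1 - h x) ^ k) + h x - (1 - (1 - h x) ^ k) * h x)"
    by (simp add: algebra_simps power_Suc2 del: power_Suc)
  also have "\<dots> \<in> E"
    by (rule star_subalgebra_diff[OF assms(1) star_subalgebra_add[OF assms(1) Suc assms(2)]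
          star_subalgebra_mult[OF assms(1) Suc assms(2)]])
  finally show ?case .
qed

lemma compact_space_attains_sup:
  assumes "compact_space X" and "continuous_map X euclideanreal \<phi>" and "topspace X \<noteq> {}"
  obtains y where "y \<in> topspace X" and "\<And>z. z \<in> topspace X \<Longrightarrow> \<phi> z \<le> \<phi> y"
proof -
  have "compact (\<phi> ` topspace X)"
    using image_compactin[OF assms(1)[unfolded compact_space_def] assms(2)] by simp
  then show ?thesis
    using compact_attains_sup[of "\<phi> ` topspace X"] assms(3) that by blast
qed

lemma compact_space_finite_cover:
  assumes "compact_space X"
    and "\<And>x. x \<in> topspace X \<Longrightarrow> openin X (U x)" and "\<And>x. x \<in> topspace X \<Longrightarrow> x \<in> U x"
  obtains C where "finite C" and "C \<subseteq> topspace X" and "topspace X \<subseteq> (\<Union>x\<in>C. U x)"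
proof -
  have "(\<forall>V\<in>U ` topspace X. openin X V) \<and> topspace X \<subseteq> \<Union>(U ` topspace X)"
    using assms(2,3) by blast
  then obtain F where "finite F" "F \<subseteq> U ` topspace X" "topspace X \<subseteq> \<Union>F"
    using assms(1)[unfolded compact_space_alt, rule_format, of "U ` topspace X"] by blast
  then show ?thesis
    using finite_subset_image[of F U "topspace X"] that by blast
qed

lemma norm_average_less_one:
  fixes v :: "'i \<Rightarrow> 'a::real_normed_vector"
  assumes "finite C" and "\<And>i. i \<in> C \<Longrightarrow> norm (v i) \<le> 1" and "j \<in> C" and "norm (v j) < 1"
  shows "norm ((1 / real (card C)) *\<^sub>R (\<Sum>i\<in>C. v i)) < 1"
proof -
  have card: "0 < real (card C)"
    using assms(1,3) card_gt_0_iff by fastforce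
  have "norm (\<Sum>i\<in>C. v i) \<le> (\<Sum>i\<in>C. norm (v i))"
    by (rule norm_sum)
  also have "\<dots> < (\<Sum>i\<in>C. 1)"
    using assms by (intro sum_strict_mono_ex1) auto
  finally show ?thesis
    using card by (simp add: field_simps)
qed

lemma star_subalgebra_local_contraction:
  fixes E :: "('x \<Rightarrow> 'a::cstar_algebra) set"
  assumes X: "compact_space X" and E: "star_subalgebra X E"
    and "f \<in> E" and x: "x \<in> topspace X" and "invertible_el (f x)"
  shows "\<exists>e\<in>E. (\<forall>y\<in>topspace X. norm (1 - e y) \<le> 1) \<and> norm (1 - e x) < 1"
proof -
  define g where "g y = cstar (f y) * f y" for y
  have g: "g \<in> E"
    unfolding g_def
    by (rule star_subalgebra_mult[OF E star_subalgebra_cstar[OF E \<open>f \<in> E\<close>] \<open>f \<in> E\<close>])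
  have "continuous_map X euclideanreal (\<lambda>y. norm (g y))"
    using star_subalgebra_continuous[OF E g] by (rule continuous_map_norm)
  then obtain y\<^sub>0 where y\<^sub>0: "\<And>y. y \<in> topspace X \<Longrightarrow> norm (g y) \<le> norm (g y\<^sub>0)"
    using compact_space_attains_sup[OF X] x by blast
  define M where "M = norm (g y\<^sub>0) + 1"
  have M: "0 < M"
    unfolding M_def by (simp add: add_nonneg_pos)
  define b where "b y = (1 / M) *\<^sub>R g y" for y
  have b: "b \<in> E"
    unfolding b_def using E g by (rule star_subalgebra_scaleR)
  have b_sa: "cstar (b y) = b y" for y
    by (simp add: b_def g_def cstar_scaleR cstar_mult cstar_cstar)
  have b_small: "norm (b y) < 1" if "y \<in> topspace X" for y
    using y\<^sub>0[OF that] M by (simp add: b_def M_def field_simps)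
  have "invertible_el (b x)"
    unfolding b_def g_def using M \<open>invertible_el (f x)\<close>
    by (intro invertible_el_scaleR invertible_el_mult invertible_el_cstar) simp_all
  show ?thesis
  proof (intro bexI[where x = "\<lambda>y. b y * b y"] conjI ballI)
    show "(\<lambda>y. b y * b y) \<in> E"
      by (rule star_subalgebra_mult[OF E b b])
    show "norm (1 - b y * b y) \<le> 1" if "y \<in> topspace X" for y
      by (rule norm_one_minus_square_le_one[OF b_sa b_small[OF that]])
    show "norm (1 - b x * b x) < 1"
      by (rule norm_one_minus_square_less_one[OF b_sa b_small[OF x] \<open>invertible_el (b x)\<close>])
  qed
qed

lemma star_subalgebra_uniform_contraction:
  fixes E :: "('x \<Rightarrow> 'a::cstar_algebra) set"
  assumes X: "compact_space X" and E: "star_subalgebra X E"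
    and invertible: "\<forall>x\<in>topspace X. \<exists>f\<in>E. invertible_el (f x)"
  shows "\<exists>h\<in>E. \<forall>y\<in>topspace X. norm (1 - h y) < 1"
proof -
  have "\<forall>x\<in>topspace X. \<exists>e. e \<in> E \<and>
      (\<forall>y\<in>topspace X. norm (1 - e y) \<le> 1) \<and> norm (1 - e x) < 1"
    using star_subalgebra_local_contraction[OF X E] invertible by blast
  then obtain e where e: "\<And>x. x \<in> topspace X \<Longrightarrow> e x \<in> E"
    and e_le: "\<And>x y. x \<in> topspace X \<Longrightarrow> y \<in> topspace X \<Longrightarrow> norm (1 - e x y) \<le> 1"
    and e_less: "\<And>x. x \<in> topspace X \<Longrightarrow> norm (1 - e x x) < 1"
    by (auto dest!: bchoice)
  define U where "U x = {y \<in> topspace X. norm (1 - e x y) < 1}" for x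
  have U_open: "openin X (U x)" if "x \<in> topspace X" for x
  proof -
    have "continuous_map X euclideanreal (\<lambda>y. norm (1 - e x y))"
      using star_subalgebra_continuous[OF E e[OF that]]
      by (intro continuous_map_norm continuous_map_diff) simp_all
    then show ?thesis
      unfolding U_def using openin_continuous_map_preimage[of X euclideanreal _ "{..<1}"] by simp
  qed
  have U_self: "x \<in> U x" if "x \<in> topspace X" for x
    using e_less[OF that] that unfolding U_def by blast
  obtain C where C: "finite C" "C \<subseteq> topspace X" and cover: "topspace X \<subseteq> (\<Union>x\<in>C. U x)"
    by (rule compact_space_finite_cover[OF X U_open U_self])
  define h where "h y = (1 / real (card C)) *\<^sub>R (\<Sum>x\<in>C. e x y)" for y
  have "h \<in> E"
    unfolding h_def using C e by (intro star_subalgebra_scaleR[OF E] star_subalgebra_sum[OF E]) auto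
  moreover have "norm (1 - h y) < 1" if y: "y \<in> topspace X" for y
  proof -
    obtain j where j: "j \<in> C" "norm (1 - e j y) < 1"
      using cover y unfolding U_def by blast
    have "card C \<noteq> 0"
      using C j by auto
    then have "(1 / real (card C)) *\<^sub>R (\<Sum>x\<in>C. 1) = (1::'a)"
      unfolding sum_constant_scaleR by simp
    then have "1 - h y = (1 / real (card C)) *\<^sub>R (\<Sum>x\<in>C. 1 - e x y)"
      by (simp add: h_def sum_subtractf scaleR_diff_right)
    also have "norm \<dots> < 1"
      using C y j e_le by (intro norm_average_less_one) auto
    finally show ?thesis .
  qed
  ultimately show ?thesis
    by blast
qed

lemma uniform_contraction_imp_one_in_uniform_closure:
  fixes E :: "('x \<Rightarrow> 'a::cstar_algebra) set"
  assumes X: "compact_space X" and E: "star_subalgebra X E"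
    and "h \<in> E" and contraction: "\<forall>y\<in>topspace X. norm (1 - h y) < 1"
  shows "(\<lambda>x. 1) \<in> uniform_closure X E"
proof (cases "topspace X = {}")
  case True
  then show ?thesis
    unfolding uniform_closure_def using star_subalgebra_zero[OF E] by auto
next
  case False
  have "continuous_map X euclideanreal (\<lambda>y. norm (1 - h y))"
    using star_subalgebra_continuous[OF E \<open>h \<in> E\<close>]
    by (intro continuous_map_norm continuous_map_diff) simp_all
  then obtain y\<^sub>0 where y\<^sub>0: "y\<^sub>0 \<in> topspace X"
    and y\<^sub>0_max: "\<And>y. y \<in> topspace X \<Longrightarrow> norm (1 - h y) \<le> norm (1 - h y\<^sub>0)"
    using compact_space_attains_sup[OF X _ False] by blast
  define \<rho> where "\<rho> = norm (1 - h y\<^sub>0)"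
  have \<rho>: "0 \<le> \<rho>" "\<rho> < 1"
    unfolding \<rho>_def using contraction y\<^sub>0 by simp_all
  show ?thesis
    unfolding uniform_closure_def
  proof (intro CollectI allI impI)
    fix \<delta> :: real
    assume "0 < \<delta>"
    then obtain k where k: "\<rho> ^ k < \<delta>"
      using real_arch_pow_inv \<rho>(2) by blast
    have "norm (1 - (1 - h y) ^ k - 1) \<le> \<delta>" if "y \<in> topspace X" for y
    proof -
      have "norm (1 - (1 - h y) ^ k - 1) \<le> norm (1 - h y) ^ k"
        using norm_power_ineq[of "1 - h y" k] by simp
      also have "\<dots> \<le> \<rho> ^ k"
        unfolding \<rho>_def using y\<^sub>0_max[OF that] by (intro power_mono) simp_all
      finally show ?thesis
        using k by simp
    qed
    then show "\<exists>f\<in>E. \<forall>y\<in>topspace X. norm (f y - 1) \<le> \<delta>"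
      using star_subalgebra_one_minus_power[OF E \<open>h \<in> E\<close>, of k] by (intro bexI) auto
  qed
qed

lemma one_in_uniform_closure_imp_invertible_values:
  fixes E :: "('x \<Rightarrow> 'a::{real_normed_algebra_1,banach}) set"
  assumes "(\<lambda>x. 1) \<in> uniform_closure X E"
  shows "\<forall>x\<in>topspace X. \<exists>f\<in>E. invertible_el (f x)"
proof
  fix x
  assume x: "x \<in> topspace X"
  obtain f where "f \<in> E" and "\<forall>y\<in>topspace X. norm (f y - 1) \<le> 1/2"
    using assms(1) unfolding uniform_closure_def by (auto dest: spec[of _ "1/2"])
  then have "norm (f x - 1) \<le> 1/2"
    using x by blast
  then have "norm (1 - f x) < 1"
    by (simp add: norm_minus_commute)
  then have "invertible_el (1 - (1 - f x))"
    by (rule invertible_el_one_minus)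
  then show "\<exists>f\<in>E. invertible_el (f x)"
    using \<open>f \<in> E\<close> by auto
qed

theorem lemma2p5:
  fixes X :: "'x topology" and E :: "('x \<Rightarrow> 'a::cstar_algebra) set"
  assumes "compact_space X" and "Hausdorff_space X"
    and "star_subalgebra X E"
  shows "(\<lambda>x. 1) \<in> uniform_closure X E \<longleftrightarrow>
         (\<forall>x\<in>topspace X. \<exists>f\<in>E. invertible_el (f x))"
proof
  assume "(\<lambda>x. 1) \<in> uniform_closure X E"
  then show "\<forall>x\<in>topspace X. \<exists>f\<in>E. invertible_el (f x)"
    by (rule one_in_uniform_closure_imp_invertible_values)
next
  assume "\<forall>x\<in>topspace X. \<exists>f\<in>E. invertible_el (f x)"
  then obtain h where "h \<in> E" and "\<forall>y\<in>topspace X. norm (1 - h y) < 1"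
    using star_subalgebra_uniform_contraction[OF assms(1,3)] by blast
  then show "(\<lambda>x. 1) \<in> uniform_closure X E"
    by (rule uniform_contraction_imp_one_in_uniform_closure[OF assms(1,3)])
qed

end
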